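(* Let $N\ge1$ and let $\mathsf{G}=\begin{bmatrix}-\frac13&\frac23&\frac23\\\frac23&-\frac13&\frac23\\\frac23&\frac23&-\frac13\end{bmatrix}$ be the Grover coin. Then the walk operator $U=S(\mathsf{G}\otimes I_2\otimes I_N)$ described in the context is aperiodic, i.e. there is no $\tau\in\mathbb{N}$ with $U^\tau=I_{6N}$.
   Context: Canonical bases $\{\ket{l}_3\},\{\ket{s}_2\},\{\ket{r}_N\}$ of $\mathbb{C}^3,\mathbb{C}^2,\mathbb{C}^N$ ($r$ mod $N$). This is the three-state walk on the Cayley graph of the dihedral group $D_N$ with generators $\{a,b\}$, with shift operator $S=\sum_{r=0}^{N-1}\big[\ket{0}_3\bra{0}_3\otimes\ket{0}_2\bra{0}_2\otimes\ket{r}_N\bra{r-1}_N+\ket{0}_3\bra{0}_3\otimes\ket{1}_2\bra{1}_2\otimes\ket{r}_N\bra{r+1}_N+\ket{1}_3\bra{1}_3\otimes I_2\otimes\ket{r}_N\bra{r}_N+\ket{2}_3\bra{2}_3\otimes(\ket{0}_2\bra{1}_2+\ket{1}_2\bra{0}_2)\otimes\ket{r}_N\bra{r}_N\big]$. *)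

theory Defs
  imports Complex_Main "Jordan_Normal_Form.Matrix"
begin

(* Kronecker (tensor) product of matrices, standard ordering:
   index of |i>|j> is i * dim B + j *)
definition kron :: "complex mat \<Rightarrow> complex mat \<Rightarrow> complex mat" where
  "kron A B = mat (dim_row A * dim_row B) (dim_col A * dim_col B)
     (\<lambda>(i,j). A $$ (i div dim_row B, j div dim_col B) * B $$ (i mod dim_row B, j mod dim_col B))"

definition ketbra :: "nat \<Rightarrow> nat \<Rightarrow> nat \<Rightarrow> complex mat" where
  "ketbra n a b = mat n n (\<lambda>(i,j). if i = a \<and> j = b then 1 else 0)"

definition msum :: "nat \<Rightarrow> ('i \<Rightarrow> complex mat) \<Rightarrow> 'i set \<Rightarrow> complex mat" where
  "msum n f I = mat n n (\<lambda>ij. \<Sum>x\<in>I. f x $$ ij)"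

definition predN :: "nat \<Rightarrow> nat \<Rightarrow> nat" where
  "predN N r = nat ((int r - 1) mod int N)"
definition succN :: "nat \<Rightarrow> nat \<Rightarrow> nat" where
  "succN N r = nat ((int r + 1) mod int N)"

(* shift operator S of the three-state walk on the Cayley graph of D_N *)
definition shiftS :: "nat \<Rightarrow> complex mat" where
  "shiftS N = msum (6 * N) (\<lambda>r.
       kron (ketbra 3 0 0) (kron (ketbra 2 0 0) (ketbra N r (predN N r)))
     + kron (ketbra 3 0 0) (kron (ketbra 2 1 1) (ketbra N r (succN N r)))
     + kron (ketbra 3 1 1) (kron (1\<^sub>m 2) (ketbra N r r))
     + kron (ketbra 3 2 2) (kron (ketbra 2 0 1 + ketbra 2 1 0) (ketbra N r r)))
     {0..<N}"

definition grover3 :: "complex mat" where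
  "grover3 = mat 3 3 (\<lambda>(i,j). if i = j then - 1/3 else 2/3)"

definition walkU :: "nat \<Rightarrow> complex mat" where
  "walkU N = shiftS N * kron grover3 (kron (1\<^sub>m 2) (1\<^sub>m N))"

end

theory Submission
  imports Defs
begin

(* On the translation-invariant states t \<otimes> (|0> - |1>) \<otimes> \<Sum>\<^sub>r |r> the shift no longer sees
   the position register, and U acts on the coin triple t as F = diag(1, 1, -1) G.
   The matrix 3F has integer entries and is congruent modulo 3 to the rank-one map
   x \<mapsto> (x\<^sub>0 + x\<^sub>1 + x\<^sub>2) (-1, -1, 1); hence for n \<ge> 1 the last entry of (3F)\<^sup>n e\<^sub>0 is not
   divisible by 3, so F\<^sup>n e\<^sub>0 \<noteq> e\<^sub>0 and no power U\<^sup>\<tau> with \<tau> \<ge> 1 is the identity. *)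

lemma sum_lessThan_mult:
  "(\<Sum>k<m * n. f k) = (\<Sum>j<m. \<Sum>r<n. f (j * n + r :: nat))"
proof (induction m)
  case 0
  then show ?case by simp
next
  case (Suc m)
  have "{..<Suc m * n} = {..<m * n} \<union> {m * n..<m * n + n}" by auto
  then have "(\<Sum>k<Suc m * n. f k) = (\<Sum>k<m * n. f k) + (\<Sum>k\<in>{m * n..<m * n + n}. f k)"
    by (simp add: sum.union_disjoint ivl_disj_int)
  also have "(\<Sum>k\<in>{m * n..<m * n + n}. f k) = (\<Sum>r<n. f (m * n + r))"
  proof -
    have "(\<Sum>k\<in>{m * n..<m * n + n}. f k) = (\<Sum>r\<in>{0..<n}. f (r + m * n))"
      using sum.shift_bounds_nat_ivl[of f 0 "m * n" n] by (simp add: add.commute)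
    then show ?thesis by (simp add: atLeast0LessThan add.commute)
  qed
  finally show ?case using Suc by simp
qed

lemma mult_add_less_mult:
  fixes j r m n :: nat
  assumes "j < m" "r < n"
  shows "j * n + r < m * n"
proof -
  have "j * n + r < Suc j * n" using assms(2) by simp
  also have "\<dots> \<le> m * n" using assms(1) by (intro mult_right_mono) auto
  finally show ?thesis .
qed

lemma kron_carrier_mat [simp]:
  "A \<in> carrier_mat a b \<Longrightarrow> B \<in> carrier_mat c d \<Longrightarrow> kron A B \<in> carrier_mat (a * c) (b * d)"
  unfolding kron_def by auto

lemma dim_kron [simp]:
  "dim_row (kron A B) = dim_row A * dim_row B" "dim_col (kron A B) = dim_col A * dim_col B"
  unfolding kron_def by simp_all

lemma index_kron:
  "i < dim_row A * dim_row B \<Longrightarrow> j < dim_col A * dim_col B \<Longrightarrow>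
   kron A B $$ (i, j) = A $$ (i div dim_row B, j div dim_col B) * B $$ (i mod dim_row B, j mod dim_col B)"
  unfolding kron_def by simp

definition kron_vec :: "complex vec \<Rightarrow> complex vec \<Rightarrow> complex vec" where
  "kron_vec x y = vec (dim_vec x * dim_vec y) (\<lambda>i. x $ (i div dim_vec y) * y $ (i mod dim_vec y))"

lemma dim_kron_vec [simp]: "dim_vec (kron_vec x y) = dim_vec x * dim_vec y"
  unfolding kron_vec_def by simp

lemma kron_vec_carrier_vec [simp]:
  "x \<in> carrier_vec m \<Longrightarrow> y \<in> carrier_vec n \<Longrightarrow> kron_vec x y \<in> carrier_vec (m * n)"
  by (metis carrier_vecD carrier_vecI dim_kron_vec)

lemma index_kron_vec:
  "i < dim_vec x * dim_vec y \<Longrightarrow> kron_vec x y $ i = x $ (i div dim_vec y) * y $ (i mod dim_vec y)"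
  unfolding kron_vec_def by simp

lemma index_kron_vec_mult_add:
  assumes "j < dim_vec x" "r < dim_vec y"
  shows "kron_vec x y $ (j * dim_vec y + r) = x $ j * y $ r"
proof -
  have "dim_vec y \<noteq> 0" using assms(2) by linarith
  then show ?thesis using assms mult_add_less_mult[OF assms] by (simp add: index_kron_vec)
qed

lemma index_kron_vec_kron_vec:
  assumes "i < dim_vec x * (dim_vec y * dim_vec z)"
  shows "kron_vec x (kron_vec y z) $ i =
    x $ (i div (dim_vec y * dim_vec z)) * (y $ (i mod (dim_vec y * dim_vec z) div dim_vec z) * z $ (i mod dim_vec z))"
proof -
  have "dim_vec y * dim_vec z > 0" using assms by (cases "dim_vec y * dim_vec z") auto
  then have "i mod (dim_vec y * dim_vec z) < dim_vec y * dim_vec z" by simp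
  moreover have "i mod (dim_vec y * dim_vec z) mod dim_vec z = i mod dim_vec z"
    by (simp add: mod_mod_cancel)
  ultimately show ?thesis using assms by (simp add: index_kron_vec)
qed

lemma mult_kron_mat_vec:
  assumes A: "A \<in> carrier_mat m m'" and B: "B \<in> carrier_mat n n'"
    and x: "x \<in> carrier_vec m'" and y: "y \<in> carrier_vec n'"
  shows "kron A B *\<^sub>v kron_vec x y = kron_vec (A *\<^sub>v x) (B *\<^sub>v y)"
proof (rule eq_vecI)
  have dims: "dim_row A = m" "dim_col A = m'" "dim_row B = n" "dim_col B = n'"
    "dim_vec x = m'" "dim_vec y = n'"
    using A B x y by auto
  fix i assume "i < dim_vec (kron_vec (A *\<^sub>v x) (B *\<^sub>v y))"
  then have i: "i < m * n" by (simp add: dims)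
  then have "n > 0" by (cases n) auto
  then have p: "i div n < m" and q: "i mod n < n"
    using i by (auto simp: less_mult_imp_div_less)
  have "(kron A B *\<^sub>v kron_vec x y) $ i = (\<Sum>k<m' * n'. kron A B $$ (i, k) * kron_vec x y $ k)"
    using i by (simp add: dims scalar_prod_def atLeast0LessThan)
  also have "\<dots> = (\<Sum>j<m'. \<Sum>r<n'. A $$ (i div n, j) * x $ j * (B $$ (i mod n, r) * y $ r))"
    unfolding sum_lessThan_mult
  proof (intro sum.cong refl)
    fix j r assume "j \<in> {..<m'}" "r \<in> {..<n'}"
    then have j: "j < m'" and r: "r < n'" by auto
    have "(j * n' + r) div n' = j" "(j * n' + r) mod n' = r" using r by auto
    then have "kron A B $$ (i, j * n' + r) = A $$ (i div n, j) * B $$ (i mod n, r)"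
      using i mult_add_less_mult[OF j r] by (simp only: index_kron dims)
    moreover have "kron_vec x y $ (j * n' + r) = x $ j * y $ r"
      using index_kron_vec_mult_add[of j x r y] j r by (simp only: dims)
    ultimately show "kron A B $$ (i, j * n' + r) * kron_vec x y $ (j * n' + r) =
        A $$ (i div n, j) * x $ j * (B $$ (i mod n, r) * y $ r)"
      by (simp only: ac_simps)
  qed
  also have "\<dots> = (\<Sum>j<m'. A $$ (i div n, j) * x $ j) * (\<Sum>r<n'. B $$ (i mod n, r) * y $ r)"
    by (simp only: sum_product)
  also have "\<dots> = (A *\<^sub>v x) $ (i div n) * (B *\<^sub>v y) $ (i mod n)"
    using p q by (simp add: dims scalar_prod_def atLeast0LessThan)
  also have "\<dots> = kron_vec (A *\<^sub>v x) (B *\<^sub>v y) $ i"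
    using i by (simp add: index_kron_vec dims)
  finally show "(kron A B *\<^sub>v kron_vec x y) $ i = kron_vec (A *\<^sub>v x) (B *\<^sub>v y) $ i" .
qed (use A B in simp)

lemma dim_ketbra [simp]: "dim_row (ketbra n a b) = n" "dim_col (ketbra n a b) = n"
  unfolding ketbra_def by simp_all

lemma ketbra_carrier_mat [simp]: "ketbra n a b \<in> carrier_mat n n"
  unfolding carrier_mat_def by simp

lemma index_ketbra_mult_vec:
  assumes "i < n" "b < n" "x \<in> carrier_vec n"
  shows "(ketbra n a b *\<^sub>v x) $ i = (if i = a then x $ b else 0)"
proof -
  have "(ketbra n a b *\<^sub>v x) $ i = (\<Sum>k\<in>{0..<n}. (if i = a \<and> k = b then 1 else 0) * x $ k)"
    using assms by (simp add: ketbra_def scalar_prod_def)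
  also have "\<dots> = (\<Sum>k\<in>{0..<n}. if k = b then (if i = a then x $ b else 0) else 0)"
    by (intro sum.cong refl) auto
  also have "\<dots> = (if i = a then x $ b else 0)"
    using assms(2) by (simp add: sum.delta)
  finally show ?thesis .
qed

lemma dim_msum [simp]: "dim_row (msum n f I) = n" "dim_col (msum n f I) = n"
  unfolding msum_def by simp_all

lemma msum_carrier_mat [simp]: "msum n f I \<in> carrier_mat n n"
  unfolding carrier_mat_def by simp

lemma msum_add:
  assumes "\<And>r. r \<in> I \<Longrightarrow> f r \<in> carrier_mat n n" "\<And>r. r \<in> I \<Longrightarrow> g r \<in> carrier_mat n n"
  shows "msum n (\<lambda>r. f r + g r) I = msum n f I + msum n g I"
proof (rule eq_matI)
  fix i j assume "i < dim_row (msum n f I + msum n g I)" "j < dim_col (msum n f I + msum n g I)"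
  then have ij: "i < n" "j < n" by (simp_all add: msum_def)
  have "(\<Sum>r\<in>I. (f r + g r) $$ (i, j)) = (\<Sum>r\<in>I. f r $$ (i, j) + g r $$ (i, j))"
  proof (intro sum.cong refl)
    fix r assume "r \<in> I"
    then have "dim_row (g r) = n" "dim_col (g r) = n" using assms(2) by auto
    then show "(f r + g r) $$ (i, j) = f r $$ (i, j) + g r $$ (i, j)" using ij by simp
  qed
  then show "msum n (\<lambda>r. f r + g r) I $$ (i, j) = (msum n f I + msum n g I) $$ (i, j)"
    using ij by (simp add: msum_def sum.distrib)
qed (simp_all add: msum_def)

lemma msum_kron:
  assumes A: "A \<in> carrier_mat m m" and f: "\<And>r. r \<in> I \<Longrightarrow> f r \<in> carrier_mat n n"
  shows "msum (m * n) (\<lambda>r. kron A (f r)) I = kron A (msum n f I)"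
proof (rule eq_matI)
  fix i j assume "i < dim_row (kron A (msum n f I))" "j < dim_col (kron A (msum n f I))"
  then have ij: "i < m * n" "j < m * n" using A by auto
  then have "n > 0" by (cases n) auto
  then have mod: "i mod n < n" "j mod n < n" by simp_all
  have "(\<Sum>r\<in>I. kron A (f r) $$ (i, j)) = (\<Sum>r\<in>I. A $$ (i div n, j div n) * f r $$ (i mod n, j mod n))"
  proof (intro sum.cong refl)
    fix r assume "r \<in> I"
    then have "dim_row (f r) = n" "dim_col (f r) = n" using f by auto
    then show "kron A (f r) $$ (i, j) = A $$ (i div n, j div n) * f r $$ (i mod n, j mod n)"
      using A ij by (simp add: index_kron)
  qed
  then show "msum (m * n) (\<lambda>r. kron A (f r)) I $$ (i, j) = kron A (msum n f I) $$ (i, j)"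
    using A ij mod by (simp add: msum_def index_kron sum_distrib_left)
qed (use A in \<open>simp_all add: msum_def\<close>)

definition ketbra_sum :: "nat \<Rightarrow> (nat \<Rightarrow> nat) \<Rightarrow> complex mat" where
  "ketbra_sum N \<sigma> = msum N (\<lambda>r. ketbra N r (\<sigma> r)) {0..<N}"

lemma ketbra_sum_carrier_mat [simp]: "ketbra_sum N \<sigma> \<in> carrier_mat N N"
  unfolding ketbra_sum_def by simp

lemma ketbra_sum_mult_ones:
  assumes "\<And>r. r < N \<Longrightarrow> \<sigma> r < N"
  shows "ketbra_sum N \<sigma> *\<^sub>v vec N (\<lambda>_. 1) = vec N (\<lambda>_. 1)"
proof (rule eq_vecI)
  fix i assume "i < dim_vec (vec N (\<lambda>_. 1 :: complex))"
  then have i: "i < N" by simp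
  have "(ketbra_sum N \<sigma> *\<^sub>v vec N (\<lambda>_. 1)) $ i = (\<Sum>k\<in>{0..<N}. \<Sum>r\<in>{0..<N}. ketbra N r (\<sigma> r) $$ (i, k))"
    using i by (simp add: ketbra_sum_def msum_def scalar_prod_def)
  also have "\<dots> = (\<Sum>k\<in>{0..<N}. if k = \<sigma> i then 1 else 0)"
  proof (intro sum.cong refl)
    fix k assume "k \<in> {0..<N}"
    then have "(\<Sum>r\<in>{0..<N}. ketbra N r (\<sigma> r) $$ (i, k))
        = (\<Sum>r\<in>{0..<N}. if r = i then (if k = \<sigma> i then 1 else 0) else 0)"
      using i by (intro sum.cong refl) (auto simp: ketbra_def)
    also have "\<dots> = (if k = \<sigma> i then 1 else 0)" using i by (simp add: sum.delta)
    finally show "(\<Sum>r\<in>{0..<N}. ketbra N r (\<sigma> r) $$ (i, k)) = (if k = \<sigma> i then 1 else 0)" .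
  qed
  also have "\<dots> = 1" using assms i by simp
  finally show "(ketbra_sum N \<sigma> *\<^sub>v vec N (\<lambda>_. 1)) $ i = vec N (\<lambda>_. 1) $ i" using i by simp
qed (simp add: ketbra_sum_def)

lemma msum_kron_kron:
  assumes "A \<in> carrier_mat a a" "B \<in> carrier_mat b b" "\<And>r. r \<in> I \<Longrightarrow> f r \<in> carrier_mat n n"
    and "m = a * (b * n)"
  shows "msum m (\<lambda>r. kron A (kron B (f r))) I = kron A (kron B (msum n f I))"
proof -
  have "msum (a * (b * n)) (\<lambda>r. kron A (kron B (f r))) I = kron A (msum (b * n) (\<lambda>r. kron B (f r)) I)"
    using assms by (intro msum_kron) auto
  also have "msum (b * n) (\<lambda>r. kron B (f r)) I = kron B (msum n f I)"
    using assms by (intro msum_kron) auto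
  finally show ?thesis using assms(4) by simp
qed

lemma shiftS_eq_kron:
  "shiftS N =
     kron (ketbra 3 0 0) (kron (ketbra 2 0 0) (ketbra_sum N (predN N)))
   + kron (ketbra 3 0 0) (kron (ketbra 2 1 1) (ketbra_sum N (succN N)))
   + kron (ketbra 3 1 1) (kron (1\<^sub>m 2) (ketbra_sum N (\<lambda>r. r)))
   + kron (ketbra 3 2 2) (kron (ketbra 2 0 1 + ketbra 2 1 0) (ketbra_sum N (\<lambda>r. r)))"
proof -
  have msum_term: "msum (6 * N) (\<lambda>r. kron A (kron B (ketbra N r (\<sigma> r)))) {0..<N}
      = kron A (kron B (ketbra_sum N \<sigma>))"
    if "A \<in> carrier_mat 3 3" "B \<in> carrier_mat 2 2" for A B \<sigma>
    unfolding ketbra_sum_def using that by (intro msum_kron_kron) auto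
  have term_carrier: "kron A (kron B (ketbra N r q)) \<in> carrier_mat (6 * N) (6 * N)"
    if "A \<in> carrier_mat 3 3" "B \<in> carrier_mat 2 2" for A B r q
    using that kron_carrier_mat[OF that(1) kron_carrier_mat[OF that(2) ketbra_carrier_mat]] by simp
  show ?thesis
    unfolding shiftS_def by (simp add: msum_add term_carrier msum_term)
qed

lemma dim_shiftS [simp]: "dim_row (shiftS N) = 6 * N" "dim_col (shiftS N) = 6 * N"
  unfolding shiftS_def by simp_all

lemma shiftS_carrier_mat: "shiftS N \<in> carrier_mat (6 * N) (6 * N)"
  unfolding carrier_mat_def by simp

definition ket_minus :: "complex vec" where
  "ket_minus = vec 2 (\<lambda>s. if s = 0 then 1 else - 1)"

lemma dim_ket_minus [simp]: "dim_vec ket_minus = 2"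
  unfolding ket_minus_def by simp

lemma index_ket_minus [simp]: "ket_minus $ 0 = 1" "ket_minus $ 1 = - 1"
  unfolding ket_minus_def by simp_all

lemma ket_minus_carrier_vec [simp]: "ket_minus \<in> carrier_vec 2"
  unfolding carrier_vec_def by simp

lemma shiftS_mult_kron_vec_ones:
  assumes N: "N > 0" and u: "u \<in> carrier_vec 3" and y: "y \<in> carrier_vec 2"
  shows "shiftS N *\<^sub>v kron_vec u (kron_vec y (vec N (\<lambda>_. 1))) =
      kron_vec (ketbra 3 0 0 *\<^sub>v u) (kron_vec (ketbra 2 0 0 *\<^sub>v y) (vec N (\<lambda>_. 1)))
    + kron_vec (ketbra 3 0 0 *\<^sub>v u) (kron_vec (ketbra 2 1 1 *\<^sub>v y) (vec N (\<lambda>_. 1)))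
    + kron_vec (ketbra 3 1 1 *\<^sub>v u) (kron_vec (1\<^sub>m 2 *\<^sub>v y) (vec N (\<lambda>_. 1)))
    + kron_vec (ketbra 3 2 2 *\<^sub>v u) (kron_vec ((ketbra 2 0 1 + ketbra 2 1 0) *\<^sub>v y) (vec N (\<lambda>_. 1)))"
proof -
  let ?v = "kron_vec u (kron_vec y (vec N (\<lambda>_. 1)))"
  have v: "?v \<in> carrier_vec (6 * N)" using u y kron_vec_carrier_vec[OF u kron_vec_carrier_vec[OF y vec_carrier]] by simp
  have kron_term: "kron A (kron B (ketbra_sum N \<sigma>)) *\<^sub>v ?v = kron_vec (A *\<^sub>v u) (kron_vec (B *\<^sub>v y) (vec N (\<lambda>_. 1)))"
    if "A \<in> carrier_mat 3 3" "B \<in> carrier_mat 2 2" "\<And>r. r < N \<Longrightarrow> \<sigma> r < N" for A B \<sigma>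
  proof -
    have "kron B (ketbra_sum N \<sigma>) \<in> carrier_mat (2 * N) (2 * N)"
      using that(2) by simp
    then have "kron A (kron B (ketbra_sum N \<sigma>)) *\<^sub>v ?v
        = kron_vec (A *\<^sub>v u) (kron B (ketbra_sum N \<sigma>) *\<^sub>v kron_vec y (vec N (\<lambda>_. 1)))"
      using that(1) u y by (intro mult_kron_mat_vec) auto
    also have "kron B (ketbra_sum N \<sigma>) *\<^sub>v kron_vec y (vec N (\<lambda>_. 1))
        = kron_vec (B *\<^sub>v y) (ketbra_sum N \<sigma> *\<^sub>v vec N (\<lambda>_. 1))"
      using that(2) y by (intro mult_kron_mat_vec[where n = N]) auto
    finally show ?thesis using ketbra_sum_mult_ones[OF that(3)] by simp
  qed
  have term_carrier: "kron A (kron B (ketbra_sum N \<sigma>)) \<in> carrier_mat (6 * N) (6 * N)"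
    if "A \<in> carrier_mat 3 3" "B \<in> carrier_mat 2 2" for A B \<sigma>
    using that kron_carrier_mat[OF that(1) kron_carrier_mat[OF that(2) ketbra_sum_carrier_mat]] by simp
  have pred: "predN N r < N" and succ: "succN N r < N" for r
    using N unfolding predN_def succN_def by (simp_all add: nat_less_iff)
  show ?thesis
    unfolding shiftS_eq_kron using v
    by (simp add: add_mult_distrib_mat_vec[of _ "6 * N" "6 * N"] term_carrier kron_term pred succ)
qed

lemma swap_mult_ket_minus: "(ketbra 2 0 1 + ketbra 2 1 0) *\<^sub>v ket_minus = - ket_minus"
proof (rule eq_vecI)
  fix s assume "s < dim_vec (- ket_minus)"
  then have s: "s < 2" by (simp add: ket_minus_def)
  have "((ketbra 2 0 1 + ketbra 2 1 0) *\<^sub>v ket_minus) $ s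
      = (ketbra 2 0 1 *\<^sub>v ket_minus) $ s + (ketbra 2 1 0 *\<^sub>v ket_minus) $ s"
    using s by (simp add: add_mult_distrib_mat_vec[of _ 2 2])
  then show "((ketbra 2 0 1 + ketbra 2 1 0) *\<^sub>v ket_minus) $ s = (- ket_minus) $ s"
    using s by (auto simp: index_ketbra_mult_vec ket_minus_def simp del: index_mult_mat_vec)
qed (simp add: ket_minus_def)

definition negate_last :: "complex vec \<Rightarrow> complex vec" where
  "negate_last u = vec 3 (\<lambda>l. if l = 2 then - u $ l else u $ l)"

lemma dim_negate_last [simp]: "dim_vec (negate_last u) = 3"
  unfolding negate_last_def by simp

lemma shiftS_mult_ket_minus:
  assumes N: "N > 0" and u: "u \<in> carrier_vec 3"
  shows "shiftS N *\<^sub>v kron_vec u (kron_vec ket_minus (vec N (\<lambda>_. 1))) =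
    kron_vec (negate_last u) (kron_vec ket_minus (vec N (\<lambda>_. 1)))"
proof (rule eq_vecI)
  fix i assume "i < dim_vec (kron_vec (negate_last u) (kron_vec ket_minus (vec N (\<lambda>_. 1))))"
  then have i: "i < 3 * (2 * N)" by simp
  define l s where "l = i div (2 * N)" and "s = i mod (2 * N) div N"
  have l: "l < 3" and s: "s < 2"
    using i N by (auto simp: l_def s_def less_mult_imp_div_less)
  have entry: "kron_vec x (kron_vec z (vec N (\<lambda>_. 1))) $ i = x $ l * z $ s"
    if "dim_vec x = 3" "dim_vec z = 2" for x z
    using that i N by (simp add: index_kron_vec_kron_vec l_def s_def)
  have "(shiftS N *\<^sub>v kron_vec u (kron_vec ket_minus (vec N (\<lambda>_. 1)))) $ i
      = (ketbra 3 0 0 *\<^sub>v u) $ l * (ketbra 2 0 0 *\<^sub>v ket_minus) $ s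
      + (ketbra 3 0 0 *\<^sub>v u) $ l * (ketbra 2 1 1 *\<^sub>v ket_minus) $ s
      + (ketbra 3 1 1 *\<^sub>v u) $ l * ket_minus $ s
      - (ketbra 3 2 2 *\<^sub>v u) $ l * ket_minus $ s"
    unfolding shiftS_mult_kron_vec_ones[OF N u ket_minus_carrier_vec] swap_mult_ket_minus
    using i u s by (simp add: entry)
  also have "\<dots> = negate_last u $ l * ket_minus $ s"
    using l s u by (auto simp: index_ketbra_mult_vec ket_minus_def negate_last_def less_Suc_eq
        numeral_eq_Suc simp del: index_mult_mat_vec)
  also have "\<dots> = kron_vec (negate_last u) (kron_vec ket_minus (vec N (\<lambda>_. 1))) $ i"
    using l by (simp add: entry negate_last_def)
  finally show "(shiftS N *\<^sub>v kron_vec u (kron_vec ket_minus (vec N (\<lambda>_. 1)))) $ i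
      = kron_vec (negate_last u) (kron_vec ket_minus (vec N (\<lambda>_. 1))) $ i" .
qed simp

lemma dim_grover3 [simp]: "dim_row grover3 = 3" "dim_col grover3 = 3"
  unfolding grover3_def by simp_all

lemma index_grover3: "l < 3 \<Longrightarrow> k < 3 \<Longrightarrow> grover3 $$ (l, k) = (if l = k then - 1 / 3 else 2 / 3)"
  unfolding grover3_def by simp

lemma grover3_carrier_mat: "grover3 \<in> carrier_mat 3 3"
  unfolding carrier_mat_def by simp

lemma walkU_carrier_mat: "walkU N \<in> carrier_mat (6 * N) (6 * N)"
  unfolding walkU_def using shiftS_carrier_mat grover3_carrier_mat
  by (auto intro!: mult_carrier_mat)

fun coin_vec :: "complex \<times> complex \<times> complex \<Rightarrow> complex vec" where
  "coin_vec (a, b, c) = vec 3 (\<lambda>l. if l = 0 then a else if l = 1 then b else c)"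

lemma dim_coin_vec [simp]: "dim_vec (coin_vec t) = 3"
  by (cases t) simp

lemma coin_vec_carrier_vec [simp]: "coin_vec t \<in> carrier_vec 3"
  unfolding carrier_vec_def by simp

definition walk_state :: "nat \<Rightarrow> complex \<times> complex \<times> complex \<Rightarrow> complex vec" where
  "walk_state N t = kron_vec (coin_vec t) (kron_vec ket_minus (vec N (\<lambda>_. 1)))"

lemma walk_state_carrier_vec: "walk_state N t \<in> carrier_vec (6 * N)"
  unfolding walk_state_def carrier_vec_def by simp

lemma walk_state_eq_iff:
  assumes "N > 0"
  shows "walk_state N t = walk_state N t' \<longleftrightarrow> t = t'"
proof
  assume eq: "walk_state N t = walk_state N t'"
  have "coin_vec t $ l = coin_vec t' $ l" if "l < 3" for l
  proof -
    have i: "l * (2 * N) < 3 * (2 * N)" using that assms by simp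
    have "walk_state N t $ (l * (2 * N)) = coin_vec t $ l" for t
      using i assms by (simp add: walk_state_def index_kron_vec_kron_vec)
    then show ?thesis using eq by metis
  qed
  then show "t = t'"
    by (cases t, cases t') (fastforce dest: spec[of _ 0] spec[of _ 1] spec[of _ 2])
qed simp

fun reduced_step :: "complex \<times> complex \<times> complex \<Rightarrow> complex \<times> complex \<times> complex" where
  "reduced_step (a, b, c) = ((- a + 2 * b + 2 * c) / 3, (2 * a - b + 2 * c) / 3, (- 2 * a - 2 * b + c) / 3)"

lemma grover3_mult_coin_vec:
  "grover3 *\<^sub>v coin_vec (a, b, c) =
    coin_vec ((- a + 2 * b + 2 * c) / 3, (2 * a - b + 2 * c) / 3, (2 * a + 2 * b - c) / 3)"
proof (rule eq_vecI)
  fix l assume "l < dim_vec (coin_vec ((- a + 2 * b + 2 * c) / 3, (2 * a - b + 2 * c) / 3, (2 * a + 2 * b - c) / 3))"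
  then have l: "l < 3" by simp
  have "(grover3 *\<^sub>v coin_vec (a, b, c)) $ l = (\<Sum>k\<in>{0..<3::nat}. grover3 $$ (l, k) * coin_vec (a, b, c) $ k)"
    using l by (simp add: scalar_prod_def row_def)
  also have "\<dots> = grover3 $$ (l, 0) * a + grover3 $$ (l, 1) * b + grover3 $$ (l, 2) * c"
    by (simp add: eval_nat_numeral)
  also have "\<dots> = coin_vec ((- a + 2 * b + 2 * c) / 3, (2 * a - b + 2 * c) / 3, (2 * a + 2 * b - c) / 3) $ l"
  proof -
    have "l = 0 \<or> l = 1 \<or> l = 2" using l by auto
    then show ?thesis by (elim disjE) (simp_all add: index_grover3 field_simps)
  qed
  finally show "(grover3 *\<^sub>v coin_vec (a, b, c)) $ l = coin_vec ((- a + 2 * b + 2 * c) / 3, (2 * a - b + 2 * c) / 3, (2 * a + 2 * b - c) / 3) $ l" .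
qed simp

lemma negate_last_grover3_mult_coin_vec:
  "negate_last (grover3 *\<^sub>v coin_vec t) = coin_vec (reduced_step t)"
proof -
  obtain a b c where t: "t = (a, b, c)" by (cases t) auto
  show ?thesis
    unfolding t grover3_mult_coin_vec negate_last_def by (intro eq_vecI) (auto simp: field_simps)
qed

lemma walkU_mult_walk_state:
  assumes N: "N > 0"
  shows "walkU N *\<^sub>v walk_state N t = walk_state N (reduced_step t)"
proof -
  let ?ones = "vec N (\<lambda>_. 1 :: complex)"
  let ?coin = "kron grover3 (kron (1\<^sub>m 2) (1\<^sub>m N))"
  have coin: "?coin \<in> carrier_mat (6 * N) (6 * N)"
    using kron_carrier_mat[OF grover3_carrier_mat kron_carrier_mat[OF one_carrier_mat[of 2] one_carrier_mat[of N]]] by simp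
  have coin_step: "?coin *\<^sub>v walk_state N t = kron_vec (grover3 *\<^sub>v coin_vec t) (kron_vec ket_minus ?ones)"
  proof -
    have "?coin *\<^sub>v walk_state N t
        = kron_vec (grover3 *\<^sub>v coin_vec t) (kron (1\<^sub>m 2) (1\<^sub>m N) *\<^sub>v kron_vec ket_minus ?ones)"
      unfolding walk_state_def using grover3_carrier_mat by (intro mult_kron_mat_vec[where n = "2 * N"]) auto
    also have "kron (1\<^sub>m 2) (1\<^sub>m N) *\<^sub>v kron_vec ket_minus ?ones = kron_vec ket_minus ?ones"
      by (subst mult_kron_mat_vec[where n = N]) auto
    finally show ?thesis .
  qed
  have "walkU N *\<^sub>v walk_state N t = shiftS N *\<^sub>v (?coin *\<^sub>v walk_state N t)"
    unfolding walkU_def by (rule assoc_mult_mat_vec[OF shiftS_carrier_mat coin walk_state_carrier_vec])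
  also have "\<dots> = shiftS N *\<^sub>v kron_vec (grover3 *\<^sub>v coin_vec t) (kron_vec ket_minus ?ones)"
    unfolding coin_step ..
  also have "\<dots> = walk_state N (reduced_step t)"
    unfolding shiftS_mult_ket_minus[OF N mult_mat_vec_carrier[OF grover3_carrier_mat coin_vec_carrier_vec]]
      negate_last_grover3_mult_coin_vec walk_state_def ..
  finally show ?thesis .
qed

lemma walkU_pow_mult_walk_state:
  assumes N: "N > 0"
  shows "walkU N ^\<^sub>m n *\<^sub>v walk_state N t = walk_state N ((reduced_step ^^ n) t)"
proof (induction n arbitrary: t)
  case 0
  have "dim_row (walkU N) = 6 * N" using walkU_carrier_mat by blast
  then show ?case using walk_state_carrier_vec by simp
next
  case (Suc n)
  have "walkU N ^\<^sub>m Suc n *\<^sub>v walk_state N t = walkU N ^\<^sub>m n *\<^sub>v (walkU N *\<^sub>v walk_state N t)"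
    unfolding pow_mat.simps
    by (rule assoc_mult_mat_vec[OF pow_carrier_mat[OF walkU_carrier_mat] walkU_carrier_mat walk_state_carrier_vec])
  also have "\<dots> = walk_state N ((reduced_step ^^ n) (reduced_step t))"
    unfolding walkU_mult_walk_state[OF N] Suc.IH ..
  finally show ?case by (simp only: funpow_Suc_right o_apply)
qed

fun integer_step :: "int \<times> int \<times> int \<Rightarrow> int \<times> int \<times> int" where
  "integer_step (a, b, c) = (- a + 2 * b + 2 * c, 2 * a - b + 2 * c, - 2 * a - 2 * b + c)"

fun scaled :: "nat \<Rightarrow> int \<times> int \<times> int \<Rightarrow> complex \<times> complex \<times> complex" where
  "scaled n (a, b, c) = (of_int a / 3 ^ n, of_int b / 3 ^ n, of_int c / 3 ^ n)"

lemma reduced_step_scaled: "reduced_step (scaled n t) = scaled (Suc n) (integer_step t)"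
  by (cases t) (simp add: field_simps)

lemma reduced_step_funpow: "(reduced_step ^^ n) (1, 0, 0) = scaled n ((integer_step ^^ n) (1, 0, 0))"
  by (induction n) (simp_all add: reduced_step_scaled)

(* Modulo 3, integer_step is x \<mapsto> (x\<^sub>0 + x\<^sub>1 + x\<^sub>2) (-1, -1, 1), which maps the line through
   (-1, -1, 1) minus the origin to itself. *)
fun on_mod3_line :: "int \<times> int \<times> int \<Rightarrow> bool" where
  "on_mod3_line (a, b, c) \<longleftrightarrow> (a + c) mod 3 = 0 \<and> (b + c) mod 3 = 0 \<and> c mod 3 \<noteq> 0"

lemma on_mod3_line_integer_step: "on_mod3_line t \<Longrightarrow> on_mod3_line (integer_step t)"
  by (cases t) (simp, presburger)

lemma on_mod3_line_funpow: "n \<ge> 1 \<Longrightarrow> on_mod3_line ((integer_step ^^ n) (1, 0, 0))"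
proof (induction n rule: dec_induct)
  case base
  then show ?case by simp
next
  case (step n)
  then show ?case by (simp add: on_mod3_line_integer_step)
qed

lemma reduced_step_funpow_neq:
  assumes n: "n \<ge> 1"
  shows "(reduced_step ^^ n) (1, 0, 0) \<noteq> (1, 0, 0)"
proof -
  obtain a b c where abc: "(integer_step ^^ n) (1, 0, 0) = (a, b, c)"
    by (cases "(integer_step ^^ n) (1, 0, 0)") auto
  have "c \<noteq> 0" using on_mod3_line_funpow[OF n] abc by auto
  then show ?thesis by (simp add: reduced_step_funpow abc)
qed

theorem corollary3p5:
  fixes N :: nat
  assumes "N \<ge> 1"
  shows "\<not> (\<exists>\<tau>::nat. \<tau> \<ge> 1 \<and> walkU N ^\<^sub>m \<tau> = 1\<^sub>m (6 * N))"
proof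
  assume "\<exists>\<tau>::nat. \<tau> \<ge> 1 \<and> walkU N ^\<^sub>m \<tau> = 1\<^sub>m (6 * N)"
  then obtain \<tau> :: nat where \<tau>: "\<tau> \<ge> 1" and periodic: "walkU N ^\<^sub>m \<tau> = 1\<^sub>m (6 * N)"
    by blast
  have N: "N > 0" using assms by simp
  have "walk_state N ((reduced_step ^^ \<tau>) (1, 0, 0)) = walk_state N (1, 0, 0)"
    using walkU_pow_mult_walk_state[OF N, of \<tau>] periodic walk_state_carrier_vec by simp
  then have "(reduced_step ^^ \<tau>) (1, 0, 0) = (1, 0, 0)"
    using walk_state_eq_iff[OF N] by blast
  with reduced_step_funpow_neq[OF \<tau>] show False by contradiction
qed

end
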